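(* A powerful set $S\subseteq 2^E$ is linear if and only if $r_S(X)\le |X|$ for all $X\subseteq E$.
   Context: For a finite set $E$, $S\subseteq 2^E$ is powerful if for every $X\subseteq E$ the number of members of $S$ contained in $X$ is a power of 2. Its rank function is $r_S(X)=\log_2\big(|S|/|\{Y\in S:Y\subseteq E\setminus X\}|\big)$. $S$ is linear if it is a binary linear space, i.e. $\emptyset\in S$ and $S$ is closed under symmetric difference. *)

theory Defs
  imports Complex_Main
begin

definition powerful :: "'a set \<Rightarrow> 'a set set \<Rightarrow> bool" where
  "powerful E S \<longleftrightarrow> S \<subseteq> Pow E \<and>
     (\<forall>X. X \<subseteq> E \<longrightarrow> (\<exists>k::nat. card {Y \<in> S. Y \<subseteq> X} = 2 ^ k))"

definition rank_S :: "'a set \<Rightarrow> 'a set set \<Rightarrow> 'a set \<Rightarrow> real" where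
  "rank_S E S X = log 2 (real (card S) / real (card {Y \<in> S. Y \<subseteq> E - X}))"

definition linear_space :: "'a set set \<Rightarrow> bool" where
  "linear_space S \<longleftrightarrow> {} \<in> S \<and> (\<forall>A\<in>S. \<forall>B\<in>S. (A - B) \<union> (B - A) \<in> S)"

end

theory Submission
  imports Defs
begin

text \<open>
  Subsets of \<open>E\<close> are vectors over GF(2), with symmetric difference as addition.
  If \<open>S\<close> is linear, deleting an element at most halves it, and \<open>r\<^sub>S(X) \<le> |X|\<close>
  follows by deleting the elements of \<open>X\<close> one at a time.

  Conversely, induct on \<open>E\<close>. Powerfulness and the rank bound pass to every
  deletion \<open>S\<^sub>z = {Y \<in> S. z \<notin> Y}\<close>, so all of these are linear, and since their
  sizes are powers of two with \<open>r\<^sub>S({z}) \<le> 1\<close>, each \<open>S\<^sub>z\<close> is all of \<open>S\<close> or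
  exactly half of it. In the second case pick \<open>x, y\<close> with \<open>S\<^sub>x \<noteq> S\<^sub>y\<close>: the
  sum \<open>V = S\<^sub>x + S\<^sub>y\<close> is a linear space with \<open>|V| = |S|\<close>, a translation and
  counting argument puts every \<open>S\<^sub>w\<close> inside \<open>V\<close>, so \<open>S\<close> and \<open>V\<close> differ in at
  most one set, and counting the sets that avoid a suitable element shows \<open>S = V\<close>.
\<close>

definition deletion :: "'a \<Rightarrow> 'a set set \<Rightarrow> 'a set set" where
  "deletion z S = {Y \<in> S. z \<notin> Y}"

lemma mem_deletion [simp]: "Y \<in> deletion z S \<longleftrightarrow> Y \<in> S \<and> z \<notin> Y"
  by (simp add: deletion_def)

lemma linear_space_sym_diff: "linear_space S \<Longrightarrow> A \<in> S \<Longrightarrow> B \<in> S \<Longrightarrow> sym_diff A B \<in> S"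
  by (simp add: linear_space_def)

lemma linear_space_empty: "linear_space S \<Longrightarrow> {} \<in> S"
  by (simp add: linear_space_def)

lemma linear_space_disjoint: "linear_space S \<Longrightarrow> linear_space {Y \<in> S. Y \<inter> X = {}}"
  unfolding linear_space_def by blast

lemma linear_space_sums:
  assumes "linear_space H" and "linear_space K"
  shows "linear_space {sym_diff h k | h k. h \<in> H \<and> k \<in> K}"
  unfolding linear_space_def
proof (intro conjI ballI)
  show "{} \<in> {sym_diff h k | h k. h \<in> H \<and> k \<in> K}"
    using assms by (auto intro!: exI[of _ "{}"] linear_space_empty)
next
  fix A B assume "A \<in> {sym_diff h k | h k. h \<in> H \<and> k \<in> K}" "B \<in> {sym_diff h k | h k. h \<in> H \<and> k \<in> K}"
  then obtain h k h' k' where "A = sym_diff h k" "B = sym_diff h' k'" "h \<in> H" "k \<in> K" "h' \<in> H" "k' \<in> K"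
    by blast
  moreover have "sym_diff (sym_diff h k) (sym_diff h' k') = sym_diff (sym_diff h h') (sym_diff k k')"
    by blast
  ultimately show "sym_diff A B \<in> {sym_diff h k | h k. h \<in> H \<and> k \<in> K}"
    using assms by (blast intro: linear_space_sym_diff)
qed

lemma exists_translate_avoiding:
  assumes "linear_space H" and "a \<in> H" and "i \<in> H" and "u \<in> a" and "u \<notin> i" and "z \<in> i"
  shows "\<exists>a' \<in> H. u \<in> a' \<and> z \<notin> a'"
proof (cases "z \<in> a")
  case True
  have "sym_diff a i \<in> H"
    using linear_space_sym_diff[OF assms(1-3)] .
  moreover have "u \<in> sym_diff a i \<and> z \<notin> sym_diff a i"
    using assms(4-6) True by auto
  ultimately show ?thesis
    by (rule rev_bexI)
next
  case False
  with assms(2,4) show ?thesis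
    by (intro rev_bexI[of a]) auto
qed

lemma inj_on_sym_diff: "inj_on (sym_diff A) X"
  by (rule inj_onI) blast

lemma card_deletion_linear_space:
  assumes lin: "linear_space H" and "finite H" and "h \<in> H" and "w \<in> h"
  shows "2 * card (deletion w H) = card H"
proof -
  have "sym_diff h ` deletion w H = H - deletion w H"
  proof
    show "sym_diff h ` deletion w H \<subseteq> H - deletion w H"
      using assms by (auto intro: linear_space_sym_diff)
    show "H - deletion w H \<subseteq> sym_diff h ` deletion w H"
    proof
      fix Y assume "Y \<in> H - deletion w H"
      then have "sym_diff h Y \<in> deletion w H" and "Y = sym_diff h (sym_diff h Y)"
        using assms by (auto intro: linear_space_sym_diff)
      then show "Y \<in> sym_diff h ` deletion w H" by blast
    qed
  qed
  then have "card (H - deletion w H) = card (deletion w H)"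
    by (metis card_image inj_on_sym_diff)
  moreover have "card (H - deletion w H) = card H - card (deletion w H)"
    using \<open>finite H\<close> by (intro card_Diff_subset) (auto simp: deletion_def)
  moreover have "card (deletion w H) \<le> card H"
    using \<open>finite H\<close> by (intro card_mono) (auto simp: deletion_def)
  ultimately show ?thesis by linarith
qed

lemma card_le_twice_deletion:
  assumes "linear_space H" and "finite H"
  shows "card H \<le> 2 * card (deletion w H)"
proof (cases "\<exists>h \<in> H. w \<in> h")
  case True
  then show ?thesis using card_deletion_linear_space[OF assms] by fastforce
next
  case False
  then have "deletion w H = H" by auto
  then show ?thesis by simp
qed

lemma card_le_pow_card_disjoint:
  assumes "linear_space S" and "finite S" and "finite X"
  shows "card S \<le> 2 ^ card X * card {Y \<in> S. Y \<inter> X = {}}"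
  using \<open>finite X\<close>
proof (induction X rule: finite_induct)
  case (insert z X)
  let ?R = "{Y \<in> S. Y \<inter> X = {}}"
  have "card ?R \<le> 2 * card (deletion z ?R)"
    using assms by (intro card_le_twice_deletion linear_space_disjoint) auto
  moreover have "deletion z ?R = {Y \<in> S. Y \<inter> insert z X = {}}"
    by auto
  ultimately show ?case
    using insert by (simp add: order_trans)
qed simp

text \<open>The condition \<open>r\<^sub>S(X) \<le> |X|\<close> with the logarithm cleared; see \<open>rank_le_card_iff\<close>.\<close>

definition rank_le_card :: "'a set \<Rightarrow> 'a set set \<Rightarrow> bool" where
  "rank_le_card E S \<longleftrightarrow> (\<forall>X \<subseteq> E. card S \<le> 2 ^ card X * card {Y \<in> S. Y \<subseteq> E - X})"

lemma rank_le_card_if_linear_space: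
  assumes "finite E" and "S \<subseteq> Pow E" and "linear_space S"
  shows "rank_le_card E S"
  unfolding rank_le_card_def
proof (intro allI impI)
  fix X assume "X \<subseteq> E"
  have "{Y \<in> S. Y \<inter> X = {}} = {Y \<in> S. Y \<subseteq> E - X}"
    using assms(2) by blast
  then show "card S \<le> 2 ^ card X * card {Y \<in> S. Y \<subseteq> E - X}"
    using card_le_pow_card_disjoint[OF assms(3), of X] assms \<open>X \<subseteq> E\<close>
    by (metis finite_Pow_iff finite_subset)
qed

text \<open>Without \<open>card S \<noteq> 2\<close> this fails for \<open>S = {{}, E}\<close>, \<open>V = {{}, v}\<close> with \<open>{} \<noteq> v \<subset> E\<close>.\<close>

lemma eq_linear_space_if_almost_subset:
  assumes lin: "linear_space V" and "finite V" and "V \<subseteq> Pow E" and "S \<subseteq> Pow E"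
    and card_eq: "card S = card V" and "card S \<noteq> 2"
    and halves: "\<And>w. w \<in> E \<Longrightarrow> 2 * card (deletion w S) = card S"
    and almost: "S - V \<subseteq> {s}"
  shows "S = V"
proof (rule ccontr)
  assume "S \<noteq> V"
  have "finite S"
    using card_eq linear_space_empty[OF lin] \<open>finite V\<close> card_gt_0_iff card.infinite by force
  have "\<not> S \<subseteq> V"
    using card_seteq[OF \<open>finite V\<close>, of S] card_eq \<open>S \<noteq> V\<close> by linarith
  then have s: "s \<in> S" "s \<notin> V"
    using almost by blast+
  have "\<not> V \<subseteq> S"
    using card_seteq[OF \<open>finite S\<close>, of V] card_eq \<open>S \<noteq> V\<close> by fastforce
  then obtain v where v: "v \<in> V" "v \<notin> S"
    by blast
  have swap: "V - {v} = S - {s}"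
  proof (rule card_seteq[symmetric])
    show "finite (V - {v})" and "S - {s} \<subseteq> V - {v}"
      using \<open>finite V\<close> almost v by auto
    show "card (V - {v}) \<le> card (S - {s})"
      using s v card_eq \<open>finite S\<close> \<open>finite V\<close> by simp
  qed
  have "s \<noteq> v"
    using s v by blast
  then obtain w where "w \<in> sym_diff s v"
    by auto
  then have w: "w \<in> E" "w \<in> s \<longleftrightarrow> w \<notin> v"
    using s v assms(3,4) by blast+
  have V_cases: "deletion w V = V \<or> 2 * card (deletion w V) = card V"
    using card_deletion_linear_space[OF lin \<open>finite V\<close>] by auto
  have fin: "finite (deletion w V)" "finite (deletion w S)"
    using \<open>finite V\<close> \<open>finite S\<close> by (auto simp: deletion_def)
  show False
  proof (cases "w \<in> s")
    case True
    then have "deletion w V = insert v (deletion w S)"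
      using w v swap by (auto simp: deletion_def)
    then have "card (deletion w V) = card (deletion w S) + 1"
      using fin v by simp
    then show False
      using V_cases halves[OF \<open>w \<in> E\<close>] card_eq \<open>card S \<noteq> 2\<close> by auto
  next
    case False
    then have "deletion w S = insert s (deletion w V)"
      using w s swap by (auto simp: deletion_def)
    then have "card (deletion w S) = card (deletion w V) + 1"
      using fin s by simp
    moreover have "2 * card (deletion w V) = card V"
      using card_deletion_linear_space[OF lin \<open>finite V\<close> v(1)] w False by simp
    ultimately show False
      using halves[OF \<open>w \<in> E\<close>] card_eq by simp
  qed
qed

locale halving_family =
  fixes E :: "'a set" and S :: "'a set set"
  assumes finite_E: "finite E"
    and subset_Pow: "S \<subseteq> Pow E"
    and empty_mem: "{} \<in> S"
    and linear_deletion: "z \<in> E \<Longrightarrow> linear_space (deletion z S)"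
    and card_deletion: "z \<in> E \<Longrightarrow> 2 * card (deletion z S) = card S"
begin

lemma finite_S: "finite S"
  using finite_E subset_Pow by (meson finite_Pow_iff finite_subset)

lemma finite_deletion: "finite (deletion z S)"
  using finite_S by (simp add: deletion_def)

lemma subset_if_deletions_eq:
  assumes "\<forall>x \<in> E. \<forall>y \<in> E. deletion x S = deletion y S"
  shows "S \<subseteq> {{}, E}"
proof
  fix Y assume "Y \<in> S"
  show "Y \<in> {{}, E}"
  proof (cases "Y = E")
    case False
    then obtain z where "z \<in> E" "z \<notin> Y"
      using \<open>Y \<in> S\<close> subset_Pow by blast
    then have "\<forall>x \<in> E. x \<notin> Y"
      using assms \<open>Y \<in> S\<close> by (metis mem_deletion)
    then show ?thesis
      using \<open>Y \<in> S\<close> subset_Pow by blast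
  qed simp
qed

lemma exists_mem_deletion:
  assumes "x \<in> E" and "y \<in> E" and "deletion x S \<noteq> deletion y S"
  shows "\<exists>a \<in> deletion y S. x \<in> a"
proof (rule ccontr)
  assume "\<not> ?thesis"
  then have "deletion y S \<subseteq> deletion x S"
    by auto
  moreover have "card (deletion x S) = card (deletion y S)"
    using card_deletion assms(1,2) by (metis mult_left_cancel zero_neq_numeral)
  ultimately show False
    using card_seteq[OF finite_deletion] assms(3) by (metis order_refl)
qed

end

locale halving_pair = halving_family +
  fixes x y :: 'a
  assumes x_mem: "x \<in> E" and y_mem: "y \<in> E"
    and deletions_differ: "deletion x S \<noteq> deletion y S"
begin

definition common :: "'a set set" where
  "common = {Y \<in> S. x \<notin> Y \<and> y \<notin> Y}"

definition contains_both :: "'a set set" where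
  "contains_both = {Y \<in> S. x \<in> Y \<and> y \<in> Y}"

definition deletion_sum :: "'a set set" where
  "deletion_sum = {sym_diff h k | h k. h \<in> deletion x S \<and> k \<in> deletion y S}"

lemma card_common: "4 * card common = card S"
proof -
  obtain b where "b \<in> deletion x S" "y \<in> b"
    using exists_mem_deletion[OF y_mem x_mem deletions_differ[symmetric]] by blast
  then have "2 * card (deletion y (deletion x S)) = card (deletion x S)"
    using linear_deletion[OF x_mem] finite_deletion by (rule_tac card_deletion_linear_space) auto
  moreover have "deletion y (deletion x S) = common"
    by (auto simp: common_def)
  ultimately show ?thesis
    using card_deletion[OF x_mem] by simp
qed

lemma card_common_pos: "0 < card common"
  using empty_mem finite_S by (auto simp: common_def card_gt_0_iff)

lemma card_contains_both: "card contains_both = card common"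
proof -
  let ?U = "deletion x S \<union> deletion y S"
  have "?U \<union> contains_both = S"
    by (auto simp: contains_both_def)
  moreover have "card (?U \<union> contains_both) = card ?U + card contains_both"
    using finite_deletion finite_S by (intro card_Un_disjoint) (auto simp: contains_both_def)
  ultimately have "card S = card ?U + card contains_both"
    by simp
  moreover have "deletion x S \<inter> deletion y S = common"
    by (auto simp: common_def)
  then have "card (deletion x S) + card (deletion y S) = card ?U + card common"
    using card_Un_Int[OF finite_deletion finite_deletion] by simp
  ultimately show ?thesis
    using card_common card_deletion[OF x_mem] card_deletion[OF y_mem] by linarith
qed

lemma linear_deletion_sum: "linear_space deletion_sum"
  unfolding deletion_sum_def using linear_deletion x_mem y_mem by (intro linear_space_sums)

lemma mem_deletion_sumI: "h \<in> deletion x S \<Longrightarrow> k \<in> deletion y S \<Longrightarrow> sym_diff h k \<in> deletion_sum"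
  unfolding deletion_sum_def by blast

lemma deletions_subset_sum: "deletion x S \<subseteq> deletion_sum" "deletion y S \<subseteq> deletion_sum"
proof -
  have "{} \<in> deletion x S" "{} \<in> deletion y S"
    using empty_mem by auto
  then show "deletion x S \<subseteq> deletion_sum" "deletion y S \<subseteq> deletion_sum"
    using mem_deletion_sumI[of _ "{}"] mem_deletion_sumI[of "{}"] by auto
qed

lemma deletion_sum_subset_Pow: "deletion_sum \<subseteq> Pow E"
proof
  fix v assume "v \<in> deletion_sum"
  then obtain h k where "v = sym_diff h k" "h \<in> S" "k \<in> S"
    unfolding deletion_sum_def by auto
  then show "v \<in> Pow E"
    using subset_Pow by blast
qed

lemma finite_deletion_sum: "finite deletion_sum"
  using deletion_sum_subset_Pow finite_E by (meson finite_Pow_iff finite_subset)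

lemma card_deletion_sum: "card deletion_sum = card S"
proof -
  have "deletion x deletion_sum \<subseteq> deletion x S"
  proof
    fix v assume "v \<in> deletion x deletion_sum"
    then have "v \<in> deletion_sum" and "x \<notin> v"
      by auto
    then obtain h k where "v = sym_diff h k" "h \<in> deletion x S" "k \<in> deletion y S"
      unfolding deletion_sum_def by blast
    with \<open>x \<notin> v\<close> have "h \<in> deletion x S" "k \<in> deletion x S"
      by auto
    then show "v \<in> deletion x S"
      using linear_space_sym_diff[OF linear_deletion[OF x_mem]] \<open>v = sym_diff h k\<close> by blast
  qed
  then have "deletion x deletion_sum = deletion x S"
    using deletions_subset_sum by auto
  moreover obtain a where "a \<in> deletion y S" "x \<in> a"
    using exists_mem_deletion[OF x_mem y_mem deletions_differ] by blast
  then have "2 * card (deletion x deletion_sum) = card deletion_sum"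
    using linear_deletion_sum finite_deletion_sum deletions_subset_sum
    by (rule_tac card_deletion_linear_space) auto
  ultimately show ?thesis
    using card_deletion[OF x_mem] by simp
qed

text \<open>
  An element \<open>z\<close> of a nonempty set in \<open>common\<close> lets us move \<open>a\<close> and \<open>b\<close> off \<open>z\<close>
  within their cosets, and then their sum lies in the linear space \<open>deletion z S\<close>.
\<close>

lemma exists_contains_both_in_sum:
  assumes "common \<noteq> {{}}"
  shows "\<exists>c \<in> contains_both. c \<in> deletion_sum"
proof -
  have "{} \<in> common"
    using empty_mem by (simp add: common_def)
  with assms have "\<not> common \<subseteq> {{}}"
    using subset_singletonD by fastforce
  then obtain i where i: "i \<in> common" "i \<noteq> {}"
    by blast
  then obtain z where "z \<in> i"
    by auto
  then have "z \<in> E"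
    using i subset_Pow by (auto simp: common_def)
  have i_del: "i \<in> deletion x S" "i \<in> deletion y S" "x \<notin> i" "y \<notin> i"
    using i(1) by (auto simp: common_def)
  obtain a where "a \<in> deletion y S" "x \<in> a"
    using exists_mem_deletion[OF x_mem y_mem deletions_differ] by blast
  then obtain a' where a': "a' \<in> deletion y S" "x \<in> a'" "z \<notin> a'"
    using exists_translate_avoiding[OF linear_deletion[OF y_mem] _ i_del(2) _ i_del(3) \<open>z \<in> i\<close>] by blast
  obtain b where "b \<in> deletion x S" "y \<in> b"
    using exists_mem_deletion[OF y_mem x_mem deletions_differ[symmetric]] by blast
  then obtain b' where b': "b' \<in> deletion x S" "y \<in> b'" "z \<notin> b'"
    using exists_translate_avoiding[OF linear_deletion[OF x_mem] _ i_del(1) _ i_del(4) \<open>z \<in> i\<close>] by blast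
  have "b' \<in> deletion z S" "a' \<in> deletion z S"
    using a' b' by auto
  then have "sym_diff b' a' \<in> deletion z S"
    by (rule linear_space_sym_diff[OF linear_deletion[OF \<open>z \<in> E\<close>]])
  then have "sym_diff b' a' \<in> contains_both"
    using a' b' by (auto simp: contains_both_def)
  moreover have "sym_diff b' a' \<in> deletion_sum"
    using a' b' by (rule_tac mem_deletion_sumI) auto
  ultimately show ?thesis
    by (rule rev_bexI)
qed

lemma mem_sum_if_avoids: "Y \<in> S \<Longrightarrow> x \<notin> Y \<or> y \<notin> Y \<Longrightarrow> Y \<in> deletion_sum"
  using deletions_subset_sum by auto

lemma exists_deletion_mem_sum:
  assumes c: "c \<in> contains_both" "c \<in> deletion_sum" and w: "w \<in> E"
  shows "\<exists>u \<in> deletion w S \<inter> deletion_sum. x \<in> u \<or> y \<in> u"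
proof (rule ccontr)
  assume none: "\<not> ?thesis"
  have "deletion w S \<subseteq> common \<union> (contains_both - {c})"
  proof
    fix h assume h: "h \<in> deletion w S"
    show "h \<in> common \<union> (contains_both - {c})"
    proof (cases "h \<in> deletion_sum")
      case True
      then show ?thesis
        using none h by (auto simp: common_def)
    next
      case False
      then show ?thesis
        using mem_sum_if_avoids h c(2) by (auto simp: contains_both_def)
    qed
  qed
  then have "card (deletion w S) \<le> card (common \<union> (contains_both - {c}))"
    using finite_S by (intro card_mono) (auto simp: common_def contains_both_def)
  also have "\<dots> \<le> card common + card (contains_both - {c})"
    by (rule card_Un_le)
  also have "\<dots> < 2 * card common"
    using card_contains_both c(1) finite_S card_common_pos by (simp add: contains_both_def)
  finally show False
    using card_deletion[OF w] card_common by linarith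
qed

lemma every_deletion_subset_sum:
  assumes "c \<in> contains_both" and "c \<in> deletion_sum" and w: "w \<in> E"
  shows "deletion w S \<subseteq> deletion_sum"
proof
  fix q assume q: "q \<in> deletion w S"
  obtain u where u: "u \<in> deletion w S" "u \<in> deletion_sum" "x \<in> u \<or> y \<in> u"
    using exists_deletion_mem_sum[OF assms] by blast
  show "q \<in> deletion_sum"
  proof (cases "x \<in> q \<and> y \<in> q")
    case True
    have "sym_diff q u \<in> deletion w S"
      using linear_space_sym_diff[OF linear_deletion[OF w] q u(1)] .
    then have "sym_diff q u \<in> deletion_sum"
      using True u(3) mem_sum_if_avoids by auto
    then have "sym_diff (sym_diff q u) u \<in> deletion_sum"
      using u(2) linear_deletion_sum by (auto intro: linear_space_sym_diff)
    moreover have "sym_diff (sym_diff q u) u = q"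
      by blast
    ultimately show ?thesis
      by simp
  qed (use q mem_sum_if_avoids in auto)
qed

lemma almost_subset_sum: "\<exists>s. S - deletion_sum \<subseteq> {s}"
proof (cases "common = {{}}")
  case True
  then have "card contains_both = 1"
    using card_contains_both by simp
  then obtain s where "contains_both = {s}"
    using card_1_singletonE by blast
  moreover have "S - deletion_sum \<subseteq> contains_both"
    using deletions_subset_sum by (auto simp: contains_both_def)
  ultimately show ?thesis
    by blast
next
  case False
  then obtain c where "c \<in> contains_both" "c \<in> deletion_sum"
    using exists_contains_both_in_sum by blast
  have "S - deletion_sum \<subseteq> {E}"
  proof
    fix Y assume Y: "Y \<in> S - deletion_sum"
    show "Y \<in> {E}"
    proof (rule ccontr)
      assume "Y \<notin> {E}"
      then obtain w where "w \<in> E" "w \<notin> Y"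
        using Y subset_Pow by blast
      then show False
        using every_deletion_subset_sum[OF \<open>c \<in> contains_both\<close> \<open>c \<in> deletion_sum\<close> \<open>w \<in> E\<close>] Y by auto
    qed
  qed
  then show ?thesis
    by blast
qed

lemma eq_deletion_sum: "S = deletion_sum"
proof -
  obtain s where "S - deletion_sum \<subseteq> {s}"
    using almost_subset_sum by blast
  moreover have "card S \<noteq> 2"
    using card_common card_common_pos by linarith
  ultimately show ?thesis
    using linear_deletion_sum finite_deletion_sum deletion_sum_subset_Pow subset_Pow
      card_deletion_sum card_deletion
    by (intro eq_linear_space_if_almost_subset) auto
qed

end

context halving_family
begin

theorem linear_space: "linear_space S"
proof (cases "\<exists>x \<in> E. \<exists>y \<in> E. deletion x S \<noteq> deletion y S")
  case True
  then obtain x y where "x \<in> E" "y \<in> E" "deletion x S \<noteq> deletion y S"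
    by blast
  then interpret halving_pair E S x y
    by unfold_locales
  show ?thesis
    using eq_deletion_sum linear_deletion_sum by simp
next
  case False
  then have "S \<subseteq> {{}, E}"
    using subset_if_deletions_eq by blast
  show ?thesis
    unfolding linear_space_def
  proof (intro conjI ballI)
    fix A B assume "A \<in> S" "B \<in> S"
    then have "sym_diff A B \<in> {A, B, {}}"
      using \<open>S \<subseteq> {{}, E}\<close> by auto
    then show "sym_diff A B \<in> S"
      using \<open>A \<in> S\<close> \<open>B \<in> S\<close> empty_mem by (metis empty_iff insertE)
  qed (rule empty_mem)
qed

end

lemma powerful_finite: "finite E \<Longrightarrow> powerful E S \<Longrightarrow> finite S"
  unfolding powerful_def by (meson finite_Pow_iff finite_subset)

lemma powerful_empty_mem:
  assumes "powerful E S"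
  shows "{} \<in> S"
proof -
  obtain k where "card {Y \<in> S. Y \<subseteq> {}} = 2 ^ k"
    using assms unfolding powerful_def by blast
  then have "{Y \<in> S. Y \<subseteq> {}} \<noteq> {}"
    by (metis card.empty power_not_zero zero_neq_numeral)
  then show ?thesis by auto
qed

lemma powerful_deletion:
  assumes "powerful E S"
  shows "powerful (E - {z}) (deletion z S)"
  unfolding powerful_def
proof (intro conjI allI impI)
  show "deletion z S \<subseteq> Pow (E - {z})"
    using assms unfolding powerful_def by auto
  fix X assume "X \<subseteq> E - {z}"
  then have "{Y \<in> deletion z S. Y \<subseteq> X} = {Y \<in> S. Y \<subseteq> X}" and "X \<subseteq> E"
    by auto
  then show "\<exists>k::nat. card {Y \<in> deletion z S. Y \<subseteq> X} = 2 ^ k"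
    using assms unfolding powerful_def by simp
qed

lemma pow2_le_cases:
  assumes "(2::nat) ^ a \<le> 2 ^ b"
  shows "2 ^ a = 2 ^ b \<or> 2 * 2 ^ a \<le> (2::nat) ^ b"
proof (cases "a = b")
  case False
  with assms have "Suc a \<le> b"
    by (simp add: Suc_le_eq)
  then show ?thesis
    using power_increasing[of "Suc a" b "2::nat"] by simp
qed simp

lemma powerful_deletion_cases:
  assumes "finite E" and "powerful E S"
  shows "deletion z S = S \<or> 2 * card (deletion z S) \<le> card S"
proof -
  have SE: "S \<subseteq> Pow E"
    using assms(2) unfolding powerful_def by blast
  have "{Y \<in> S. Y \<subseteq> E - {z}} = deletion z S" and "{Y \<in> S. Y \<subseteq> E} = S"
    using SE by auto
  then obtain a b where a: "card (deletion z S) = 2 ^ a" and b: "card S = 2 ^ b"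
    using assms(2) unfolding powerful_def by (metis Diff_subset order_refl)
  have "card (deletion z S) \<le> card S"
    using powerful_finite[OF assms] by (intro card_mono) (auto simp: deletion_def)
  then have "card (deletion z S) = card S \<or> 2 * card (deletion z S) \<le> card S"
    using pow2_le_cases a b by metis
  moreover have "card (deletion z S) = card S \<Longrightarrow> deletion z S = S"
    using powerful_finite[OF assms] by (intro card_seteq) (auto simp: deletion_def)
  ultimately show ?thesis by blast
qed

lemma rank_le_card_deletion:
  assumes "finite E" and "powerful E S" and "rank_le_card E S" and "z \<in> E"
  shows "rank_le_card (E - {z}) (deletion z S)"
  unfolding rank_le_card_def
proof (intro allI impI)
  fix X assume X: "X \<subseteq> E - {z}"
  have del: "{Y \<in> deletion z S. Y \<subseteq> E - {z} - X} = {Y \<in> S. Y \<subseteq> E - insert z X}"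
    by auto
  show "card (deletion z S) \<le> 2 ^ card X * card {Y \<in> deletion z S. Y \<subseteq> E - {z} - X}"
    using powerful_deletion_cases[OF assms(1,2), of z]
  proof
    assume eq: "deletion z S = S"
    then have "{Y \<in> S. Y \<subseteq> E - insert z X} = {Y \<in> S. Y \<subseteq> E - X}"
      by auto
    then show ?thesis
      using assms(3) X eq del unfolding rank_le_card_def by auto
  next
    assume half: "2 * card (deletion z S) \<le> card S"
    have "finite X"
      using X assms(1) finite_subset by blast
    then have "card (insert z X) = Suc (card X)"
      using X by (simp add: subset_Diff_insert)
    moreover have "card S \<le> 2 ^ card (insert z X) * card {Y \<in> S. Y \<subseteq> E - insert z X}"
      using assms(3,4) X unfolding rank_le_card_def by blast
    ultimately show ?thesis
      using half del by simp
  qed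
qed

lemma log2_div_le_iff:
  fixes a b n :: nat
  assumes "0 < a" and "0 < b"
  shows "log 2 (a / b) \<le> n \<longleftrightarrow> a \<le> 2 ^ n * b"
proof -
  have "log 2 (a / b) \<le> n \<longleftrightarrow> a / b \<le> 2 powr n"
    using assms by (intro log_le_iff) auto
  also have "\<dots> \<longleftrightarrow> real a \<le> real (2 ^ n * b)"
    using assms by (simp add: powr_realpow pos_divide_le_eq)
  also have "\<dots> \<longleftrightarrow> a \<le> 2 ^ n * b"
    by (rule of_nat_le_iff)
  finally show ?thesis .
qed

lemma rank_le_card_iff:
  assumes "finite E" and "powerful E S"
  shows "rank_le_card E S \<longleftrightarrow> (\<forall>X. X \<subseteq> E \<longrightarrow> rank_S E S X \<le> real (card X))"
proof -
  have "{} \<in> {Y \<in> S. Y \<subseteq> E - X}" for X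
    using powerful_empty_mem[OF assms(2)] by simp
  then have "0 < card {Y \<in> S. Y \<subseteq> E - X}" and "0 < card S" for X
    using powerful_finite[OF assms] by (auto simp: card_gt_0_iff)
  then show ?thesis
    unfolding rank_le_card_def rank_S_def by (simp add: log2_div_le_iff)
qed

lemma linear_space_if_rank_le_card:
  assumes "finite E" and "powerful E S" and "rank_le_card E S"
  shows "linear_space S"
  using assms
proof (induction E arbitrary: S rule: finite_psubset_induct)
  case (psubset E)
  have SE: "S \<subseteq> Pow E"
    using psubset.prems(1) unfolding powerful_def by blast
  have linear_deletion: "linear_space (deletion z S)" if "z \<in> E" for z
  proof (rule psubset.IH)
    show "E - {z} \<subset> E"
      using that by blast
    show "powerful (E - {z}) (deletion z S)"
      using psubset.prems(1) by (rule powerful_deletion)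
    show "rank_le_card (E - {z}) (deletion z S)"
      using psubset.hyps psubset.prems that by (rule rank_le_card_deletion)
  qed
  show ?case
  proof (cases "\<exists>z \<in> E. deletion z S = S")
    case True
    then show ?thesis
      using linear_deletion by metis
  next
    case False
    have "2 * card (deletion z S) = card S" if "z \<in> E" for z
    proof -
      have "card S \<le> 2 ^ card {z} * card {Y \<in> S. Y \<subseteq> E - {z}}"
        using psubset.prems(2) that unfolding rank_le_card_def by blast
      moreover have "{Y \<in> S. Y \<subseteq> E - {z}} = deletion z S"
        using SE by auto
      ultimately have "card S \<le> 2 * card (deletion z S)"
        by simp
      moreover have "2 * card (deletion z S) \<le> card S"
        using powerful_deletion_cases[OF psubset.hyps psubset.prems(1), of z] False that by blast
      ultimately show ?thesis
        by linarith
    qed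
    moreover have "{} \<in> S"
      using psubset.prems(1) by (rule powerful_empty_mem)
    ultimately interpret halving_family E S
      using psubset.hyps SE linear_deletion by unfold_locales auto
    show ?thesis
      by (rule linear_space)
  qed
qed

theorem corollary3:
  fixes E :: "'a set" and S :: "'a set set"
  assumes "finite E" and "powerful E S"
  shows "linear_space S \<longleftrightarrow> (\<forall>X. X \<subseteq> E \<longrightarrow> rank_S E S X \<le> real (card X))"
proof -
  have "S \<subseteq> Pow E"
    using assms(2) unfolding powerful_def by blast
  then have "linear_space S \<longleftrightarrow> rank_le_card E S"
    using rank_le_card_if_linear_space[OF assms(1)] linear_space_if_rank_le_card[OF assms] by blast
  also have "\<dots> \<longleftrightarrow> (\<forall>X. X \<subseteq> E \<longrightarrow> rank_S E S X \<le> real (card X))"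
    using assms by (rule rank_le_card_iff)
  finally show ?thesis .
qed

end
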